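(* With $\bar X$, $\bar s$, $\bar G$, $\bar C$ as below, let $\varphi:\bar X\to\mathbb{R}$ be continuous, let $\bar\varphi$ be the filtering function on $\bar C$ induced by $\varphi$, and let $\varphi':S^2\to\mathbb{R}$, $\varphi'(x_1,x_2,x_3)=\max\{\varphi(x_1,x_2,x_3,1),\varphi(x_1,x_2,x_3,-1)\}$. Then for every $n$ the persistent Betti number function $\rho^{\bar\varphi}_n$ of the $\bar G$-chain complex $\bar C$ equals the classical persistent Betti number function $\rho^{\varphi'}_n$ of $\varphi'$ on $S^2$ (singular homology of sublevel sets over $\mathbb{K}$).
   Context: $\bar X=X_+\cup X_-\subset\mathbb{R}^4$ with $X_\pm=\{(x_1,x_2,x_3,x_4):x_1^2+x_2^2+x_3^2=1,\ x_4=\pm1\}$; $\bar s(x_1,x_2,x_3,x_4)=(x_1,x_2,x_3,-x_4)$; $\bar G$ is the group of maps $(x_1,x_2,x_3,x_4)\mapsto(\tilde g(x_1,x_2,x_3),x_4)$ with $\tilde g$ an isometry of $S^2$; $\bar C\subseteq S(\bar X)$ is the subcomplex of chains of the form $\sum_r a^r(\sigma_{j_r}+\bar s\circ\sigma_{j_r})$. Induced filtering function: $\bar\varphi(0)=-\infty$; for a non-null chain in reduced form $\sum_r a^r\sigma_{j_r}$ (distinct simplices, nonzero coefficients), $\bar\varphi$ is the maximum of $\varphi$ on $\bigcup_r\sigma_{j_r}(\Delta_n)$. PBNF of $\bar C$: for $u<v$, $\rho^{\bar\varphi}_n(u,v)$ is the rank of the image of $H_n(\bar C^{\bar\varphi\le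 u})\to H_n(\bar C^{\bar\varphi\le v})$, with $\bar C^{\bar\varphi\le u}_n=\{c\in\bar C_n:\bar\varphi(c)\le u\}$. Classical PBNF: $\rho^{\varphi'}_n(u,v)$ is the rank of the image of $H_n(\{\varphi'\le u\})\to H_n(\{\varphi'\le v\})$. *)

theory Defs
  imports "HOL-Analysis.Analysis"
begin

definition S2 :: "(real \<times> real \<times> real) set" where
  "S2 = {(x1, x2, x3). x1^2 + x2^2 + x3^2 = 1}"

definition Xplus :: "(real \<times> real \<times> real \<times> real) set" where
  "Xplus = {(x1, x2, x3, x4). x1^2 + x2^2 + x3^2 = 1 \<and> x4 = 1}"

definition Xminus :: "(real \<times> real \<times> real \<times> real) set" where
  "Xminus = {(x1, x2, x3, x4). x1^2 + x2^2 + x3^2 = 1 \<and> x4 = -1}"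

definition Xbar :: "(real \<times> real \<times> real \<times> real) set" where
  "Xbar = Xplus \<union> Xminus"

definition sbar :: "real \<times> real \<times> real \<times> real \<Rightarrow> real \<times> real \<times> real \<times> real" where
  "sbar = (\<lambda>(x1, x2, x3, x4). (x1, x2, x3, - x4))"

definition phi_prime :: "(real \<times> real \<times> real \<times> real \<Rightarrow> real) \<Rightarrow> real \<times> real \<times> real \<Rightarrow> real" where
  "phi_prime \<phi> = (\<lambda>(x1, x2, x3). max (\<phi> (x1, x2, x3, 1)) (\<phi> (x1, x2, x3, -1)))"

definition std_simplex :: "nat \<Rightarrow> (nat \<Rightarrow> real) set" where
  "std_simplex n = {t. (\<forall>i. 0 \<le> t i) \<and> (\<forall>i>n. t i = 0) \<and> (\<Sum>i\<le>n. t i) = 1}"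

definition sing_simplex :: "nat \<Rightarrow> 'p::topological_space set \<Rightarrow> ((nat \<Rightarrow> real) \<Rightarrow> 'p) \<Rightarrow> bool" where
  "sing_simplex n Y \<sigma> \<longleftrightarrow> continuous_on (std_simplex n) \<sigma> \<and> \<sigma> ` std_simplex n \<subseteq> Y
      \<and> \<sigma> \<in> extensional (std_simplex n)"

definition face_map :: "nat \<Rightarrow> (nat \<Rightarrow> real) \<Rightarrow> (nat \<Rightarrow> real)" where
  "face_map k t = (\<lambda>i. if i < k then t i else if i = k then 0 else t (i - 1))"

definition sing_face :: "nat \<Rightarrow> nat \<Rightarrow> ((nat \<Rightarrow> real) \<Rightarrow> 'p) \<Rightarrow> ((nat \<Rightarrow> real) \<Rightarrow> 'p)" where
  "sing_face n k \<sigma> = restrict (\<sigma> \<circ> face_map k) (std_simplex (n - 1))"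

type_synonym ('p, 'k) chain = "((nat \<Rightarrow> real) \<Rightarrow> 'p) \<Rightarrow> 'k"

definition chains :: "'k itself \<Rightarrow> nat \<Rightarrow> 'p::topological_space set \<Rightarrow> ('p, 'k::field) chain set" where
  "chains _ n Y = {c. finite {\<sigma>. c \<sigma> \<noteq> 0} \<and> (\<forall>\<sigma>. c \<sigma> \<noteq> 0 \<longrightarrow> sing_simplex n Y \<sigma>)}"

definition chain_bd :: "nat \<Rightarrow> ('p, 'k::field) chain \<Rightarrow> ('p, 'k) chain" where
  "chain_bd n c = (if n = 0 then (\<lambda>\<tau>. 0) else
     (\<lambda>\<tau>. \<Sum>\<sigma>\<in>{\<sigma>. c \<sigma> \<noteq> 0}. \<Sum>k\<le>n. if sing_face n k \<sigma> = \<tau> then (-1)^k * c \<sigma> else 0))"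

definition lincomb :: "(('p, 'k::field) chain \<Rightarrow> 'k) \<Rightarrow> ('p, 'k) chain set \<Rightarrow> ('p, 'k) chain" where
  "lincomb a S = (\<lambda>\<tau>. \<Sum>s\<in>S. a s * s \<tau>)"

definition indep_mod :: "('p, 'k::field) chain set \<Rightarrow> ('p, 'k) chain set \<Rightarrow> bool" where
  "indep_mod W S \<longleftrightarrow> (\<forall>a. lincomb a S \<in> W \<longrightarrow> (\<forall>s\<in>S. a s = 0))"

(* For chain subcomplexes A m \<subseteq> A' m (degreewise), the rank of the image of
   H_n(A) \<rightarrow> H_n(A') induced by inclusion, i.e. dim (Z_n(A) + B_n(A')) / B_n(A'),
   as an extended natural (\<infinity> if infinite-dimensional). *)
definition pers_rank :: "(nat \<Rightarrow> ('p, 'k::field) chain set) \<Rightarrow> (nat \<Rightarrow> ('p, 'k) chain set) \<Rightarrow> nat \<Rightarrow> enat" where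
  "pers_rank A A' n = Sup {enat (card S) | S. finite S \<and> S \<subseteq> {c \<in> A n. chain_bd n c = (\<lambda>_. 0)}
       \<and> indep_mod (chain_bd (Suc n) ` A' (Suc n)) S}"

definition pbn_classical :: "'k::field itself \<Rightarrow> 'p::topological_space set \<Rightarrow> ('p \<Rightarrow> real)
      \<Rightarrow> nat \<Rightarrow> real \<Rightarrow> real \<Rightarrow> enat" where
  "pbn_classical K Y f n u v =
     pers_rank (\<lambda>m. chains K m {y \<in> Y. f y \<le> u}) (\<lambda>m. chains K m {y \<in> Y. f y \<le> v}) n"

definition delta :: "((nat \<Rightarrow> real) \<Rightarrow> 'p) \<Rightarrow> ('p, 'k::field) chain" where
  "delta \<sigma> = (\<lambda>\<tau>. if \<tau> = \<sigma> then 1 else 0)"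

definition Cbar :: "'k::field itself \<Rightarrow> nat \<Rightarrow> (real \<times> real \<times> real \<times> real, 'k) chain set" where
  "Cbar K n = {c. \<exists>S a. finite S \<and> (\<forall>\<sigma>\<in>S. sing_simplex n Xbar \<sigma>) \<and>
      c = (\<lambda>\<tau>. \<Sum>\<sigma>\<in>S. a \<sigma> * (delta \<sigma> \<tau> + delta (restrict (sbar \<circ> \<sigma>) (std_simplex n)) \<tau>))}"

definition phibar :: "(real \<times> real \<times> real \<times> real \<Rightarrow> real) \<Rightarrow> nat
      \<Rightarrow> (real \<times> real \<times> real \<times> real, 'k::field) chain \<Rightarrow> ereal" where
  "phibar \<phi> n c = (if c = (\<lambda>_. 0) then -\<infinity> else
      Sup ((\<lambda>x. ereal (\<phi> x)) ` (\<Union>{\<sigma> ` std_simplex n | \<sigma>. c \<sigma> \<noteq> 0})))"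

definition Cbar_sub :: "'k::field itself \<Rightarrow> (real \<times> real \<times> real \<times> real \<Rightarrow> real) \<Rightarrow> nat \<Rightarrow> real
      \<Rightarrow> (real \<times> real \<times> real \<times> real, 'k) chain set" where
  "Cbar_sub K \<phi> n u = {c \<in> Cbar K n. phibar \<phi> n c \<le> ereal u}"

definition pbn_bar :: "'k::field itself \<Rightarrow> (real \<times> real \<times> real \<times> real \<Rightarrow> real)
      \<Rightarrow> nat \<Rightarrow> real \<Rightarrow> real \<Rightarrow> enat" where
  "pbn_bar K \<phi> n u v = pers_rank (\<lambda>m. Cbar_sub K \<phi> m u) (\<lambda>m. Cbar_sub K \<phi> m v) n"

end

theory Submission
  imports Defs
begin

text \<open>A singular simplex of \<open>\<bar>X = S\<^sup>2 \<times> {1, -1}\<close> has a connected domain, so it stays on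
  one sheet and is one of the two lifts \<open>\<rho>\<^sub>+, \<rho>\<^sub>-\<close> of a singular simplex \<open>\<rho>\<close> of \<open>S\<^sup>2\<close>.
  Hence \<open>d \<mapsto> \<Sum>\<^sub>\<rho> d \<rho> (\<rho>\<^sub>+ + \<rho>\<^sub>-)\<close> is an isomorphism from the singular chains of
  \<open>S\<^sup>2\<close> onto \<open>\<bar>C\<close>, and it commutes with the boundary because faces of lifts are lifts of
  faces. The lifted chain has \<open>\<bar>\<phi> \<le> u\<close> iff \<open>\<phi> \<le> u\<close> on both lifts of every simplex in the
  support of \<open>d\<close>, i.e. iff \<open>d\<close> is a chain of the sublevel set \<open>{\<phi>' \<le> u}\<close>. So the isomorphism
  matches the two filtrations degreewise, and persistent ranks are invariant under such an
  isomorphism.\<close>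

lemma continuous_on_restrict_iff: "continuous_on S (restrict f S) \<longleftrightarrow> continuous_on S f"
  by (rule continuous_on_cong) auto

lemma vertex_in_std_simplex: "(\<lambda>i. if i = 0 then 1 else 0) \<in> std_simplex m"
  unfolding std_simplex_def by auto

lemma sum_atMost_split: "k \<le> Suc m \<Longrightarrow> (\<Sum>i\<le>m. (f::nat \<Rightarrow> real) i) = (\<Sum>i<k. f i) + (\<Sum>i=k..m. f i)"
  by (subst sum.union_disjoint[symmetric]) (auto intro!: sum.cong)

lemma face_map_in_std_simplex:
  assumes "k \<le> Suc n" "t \<in> std_simplex n"
  shows "face_map k t \<in> std_simplex (Suc n)"
proof -
  let ?f = "face_map k t"
  have "(\<Sum>i\<le>Suc n. ?f i) = (\<Sum>i<k. ?f i) + (\<Sum>i=k..Suc n. ?f i)"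
    using assms(1) by (intro sum_atMost_split) simp
  also have "(\<Sum>i=k..Suc n. ?f i) = ?f k + (\<Sum>i=Suc k..Suc n. ?f i)"
    using assms(1) by (rule sum.atLeast_Suc_atMost)
  also have "(\<Sum>i=Suc k..Suc n. ?f i) = (\<Sum>i=k..n. t i)"
    by (subst sum.shift_bounds_cl_Suc_ivl) (simp add: face_map_def)
  also have "(\<Sum>i<k. ?f i) = (\<Sum>i<k. t i)" by (simp add: face_map_def)
  finally have "(\<Sum>i\<le>Suc n. ?f i) = (\<Sum>i<k. t i) + (\<Sum>i=k..n. t i)"
    by (simp add: face_map_def)
  also have "\<dots> = (\<Sum>i\<le>n. t i)"
    using assms(1) by (rule sum_atMost_split[symmetric])
  finally show ?thesis using assms unfolding std_simplex_def face_map_def by auto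
qed

lemma path_connected_std_simplex: "path_connected (std_simplex m)"
  unfolding path_connected_def
proof (intro ballI)
  fix t t' assume t: "t \<in> std_simplex m" and t': "t' \<in> std_simplex m"
  define g where "g = (\<lambda>s::real. \<lambda>i. (1 - s) * t i + s * t' i)"
  have "path_image g \<subseteq> std_simplex m"
  proof
    fix x assume "x \<in> path_image g"
    then obtain s where s: "0 \<le> s" "s \<le> 1" "x = g s" by (auto simp: path_image_def)
    have "(\<Sum>i\<le>m. x i) = (1 - s) * (\<Sum>i\<le>m. t i) + s * (\<Sum>i\<le>m. t' i)"
      unfolding s(3) g_def by (simp add: sum.distrib sum_distrib_left)
    then show "x \<in> std_simplex m"
      using t t' s unfolding std_simplex_def g_def by auto
  qed
  moreover have "path g" unfolding path_def g_def by (intro continuous_intros)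
  ultimately show "\<exists>g. path g \<and> path_image g \<subseteq> std_simplex m \<and> pathstart g = t \<and> pathfinish g = t'"
    by (auto simp: g_def pathstart_def pathfinish_def)
qed

lemma sign_valued_constant_on_std_simplex:
  fixes h :: "(nat \<Rightarrow> real) \<Rightarrow> real"
  assumes "continuous_on (std_simplex m) h" and "\<And>t. t \<in> std_simplex m \<Longrightarrow> h t \<in> {1, -1}"
  shows "h constant_on std_simplex m"
proof (rule continuous_finite_range_constant)
  show "connected (std_simplex m)"
    by (rule path_connected_imp_connected[OF path_connected_std_simplex])
  show "finite (h ` std_simplex m)"
    using assms(2) by (auto intro: finite_subset[of _ "{1, -1}"])
qed (rule assms(1))

definition rank_witness :: "(nat \<Rightarrow> ('p, 'k::field) chain set) \<Rightarrow> (nat \<Rightarrow> ('p, 'k) chain set)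
      \<Rightarrow> nat \<Rightarrow> ('p, 'k) chain set \<Rightarrow> bool" where
  "rank_witness A A' n S \<longleftrightarrow> finite S \<and> S \<subseteq> {c \<in> A n. chain_bd n c = (\<lambda>_. 0)}
      \<and> indep_mod (chain_bd (Suc n) ` A' (Suc n)) S"

lemma pers_rank_eq_Sup_rank_witness:
  "pers_rank A A' n = Sup {enat (card S) | S. rank_witness A A' n S}"
  unfolding pers_rank_def rank_witness_def ..

lemma lincomb_cong: "(\<And>s. s \<in> S \<Longrightarrow> a s = a' s) \<Longrightarrow> lincomb a S = lincomb a' S"
  unfolding lincomb_def by (auto intro!: ext sum.cong)

text \<open>\<open>f\<close> and \<open>g\<close> are the degree \<open>n\<close> and \<open>n + 1\<close> parts of a chain map onto the second filtration;
  it need only be injective on a subspace \<open>U\<close> holding the \<open>n\<close>-chains and the boundaries.\<close>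

locale pers_rank_iso =
  fixes A A' :: "nat \<Rightarrow> ('p, 'k::field) chain set" and B B' :: "nat \<Rightarrow> ('q, 'k) chain set"
    and n :: nat and f g :: "('p, 'k) chain \<Rightarrow> ('q, 'k) chain" and U :: "('p, 'k) chain set"
  assumes image_f: "f ` A n = B n" and image_g: "g ` A' (Suc n) = B' (Suc n)"
    and inj_on_U: "inj_on f U" and A_sub_U: "A n \<subseteq> U"
    and boundaries_sub_U: "chain_bd (Suc n) ` A' (Suc n) \<subseteq> U"
    and lincomb_in_U: "\<And>a S. finite S \<Longrightarrow> S \<subseteq> U \<Longrightarrow> lincomb a S \<in> U"
    and f_lincomb: "\<And>a S. f (lincomb a S) = (\<lambda>\<tau>. \<Sum>s\<in>S. a s * f s \<tau>)"
    and f_cycle_iff: "\<And>x. x \<in> A n \<Longrightarrow> chain_bd n (f x) = (\<lambda>_. 0) \<longleftrightarrow> chain_bd n x = (\<lambda>_. 0)"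
    and bd_g: "\<And>y. y \<in> A' (Suc n) \<Longrightarrow> chain_bd (Suc n) (g y) = f (chain_bd (Suc n) y)"
begin

lemma lincomb_image: "inj_on f S \<Longrightarrow> lincomb a (f ` S) = f (lincomb (a \<circ> f) S)"
  by (simp only: f_lincomb) (simp add: lincomb_def sum.reindex)

lemma boundaries_B_eq_image: "chain_bd (Suc n) ` B' (Suc n) = f ` chain_bd (Suc n) ` A' (Suc n)"
  unfolding image_g[symmetric] image_image by (auto simp: bd_g)

lemma lincomb_in_boundaries_iff:
  assumes "finite S" "S \<subseteq> A n"
  shows "f (lincomb a S) \<in> chain_bd (Suc n) ` B' (Suc n) \<longleftrightarrow> lincomb a S \<in> chain_bd (Suc n) ` A' (Suc n)"
proof -
  have "lincomb a S \<in> U" using assms A_sub_U by (intro lincomb_in_U) auto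
  then show ?thesis
    unfolding boundaries_B_eq_image using inj_on_U boundaries_sub_U by (auto dest: inj_onD)
qed

lemma rank_witness_image:
  assumes S: "rank_witness A A' n S"
  shows "rank_witness B B' n (f ` S)" and "card (f ` S) = card S"
proof -
  have SA: "S \<subseteq> A n" and fin: "finite S" using S unfolding rank_witness_def by auto
  have inj: "inj_on f S" using inj_on_subset[OF inj_on_U] SA A_sub_U by blast
  show "card (f ` S) = card S" using card_image[OF inj] .
  have "f ` S \<subseteq> {c \<in> B n. chain_bd n c = (\<lambda>_. 0)}"
    using S image_f f_cycle_iff unfolding rank_witness_def by blast
  moreover have "indep_mod (chain_bd (Suc n) ` B' (Suc n)) (f ` S)"
    unfolding indep_mod_def
  proof (intro allI impI ballI)
    fix a t assume "lincomb a (f ` S) \<in> chain_bd (Suc n) ` B' (Suc n)" and "t \<in> f ` S"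
    then show "a t = 0"
      using S lincomb_in_boundaries_iff[OF fin SA, of "a \<circ> f"]
      unfolding lincomb_image[OF inj] rank_witness_def indep_mod_def by auto
  qed
  ultimately show "rank_witness B B' n (f ` S)" using fin unfolding rank_witness_def by blast
qed

lemma rank_witness_preimage:
  assumes T: "rank_witness B B' n T"
  obtains S where "rank_witness A A' n S" and "T = f ` S"
proof -
  have "T \<subseteq> f ` A n" using T image_f unfolding rank_witness_def by auto
  then obtain S where SA: "S \<subseteq> A n" and inj: "inj_on f S" and TS: "T = f ` S"
    using subset_image_inj by metis
  have fin: "finite S" using T TS inj finite_image_iff unfolding rank_witness_def by blast
  have "S \<subseteq> {c \<in> A n. chain_bd n c = (\<lambda>_. 0)}"
    using T TS SA f_cycle_iff unfolding rank_witness_def by blast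
  moreover have "indep_mod (chain_bd (Suc n) ` A' (Suc n)) S"
    unfolding indep_mod_def
  proof (intro allI impI ballI)
    fix a s assume h: "lincomb a S \<in> chain_bd (Suc n) ` A' (Suc n)" and s: "s \<in> S"
    define b where "b = (\<lambda>t. a (the_inv_into S f t))"
    have "lincomb (b \<circ> f) S = lincomb a S"
      by (rule lincomb_cong) (simp add: b_def the_inv_into_f_f[OF inj])
    then have "lincomb b T \<in> chain_bd (Suc n) ` B' (Suc n)"
      using h lincomb_in_boundaries_iff[OF fin SA] lincomb_image[OF inj] TS by simp
    then have "b (f s) = 0" using T TS s unfolding rank_witness_def indep_mod_def by blast
    then show "a s = 0" by (simp add: b_def the_inv_into_f_f[OF inj s])
  qed
  ultimately show ?thesis using that fin TS unfolding rank_witness_def by blast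
qed

lemma pers_rank_eq: "pers_rank A A' n = pers_rank B B' n"
proof -
  have "{enat (card S) | S. rank_witness A A' n S} = {enat (card T) | T. rank_witness B B' n T}"
  proof (intro equalityI subsetI)
    fix x assume "x \<in> {enat (card S) | S. rank_witness A A' n S}"
    then obtain S where "x = enat (card S)" "rank_witness A A' n S" by blast
    then have "x = enat (card (f ` S)) \<and> rank_witness B B' n (f ` S)"
      using rank_witness_image by simp
    then show "x \<in> {enat (card T) | T. rank_witness B B' n T}" by blast
  next
    fix x assume "x \<in> {enat (card T) | T. rank_witness B B' n T}"
    then obtain T where x: "x = enat (card T)" and T: "rank_witness B B' n T" by blast
    obtain S where S: "rank_witness A A' n S" and TS: "T = f ` S"
      using rank_witness_preimage[OF T] by blast
    have "x = enat (card S)" using x TS rank_witness_image(2)[OF S] by simp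
    then show "x \<in> {enat (card S) | S. rank_witness A A' n S}" using S by blast
  qed
  then show ?thesis unfolding pers_rank_eq_Sup_rank_witness by simp
qed

end

definition lift_simplex :: "real \<Rightarrow> nat \<Rightarrow> ((nat \<Rightarrow> real) \<Rightarrow> real \<times> real \<times> real)
      \<Rightarrow> ((nat \<Rightarrow> real) \<Rightarrow> real \<times> real \<times> real \<times> real)" where
  "lift_simplex e m \<rho> = restrict (\<lambda>t. (fst (\<rho> t), fst (snd (\<rho> t)), snd (snd (\<rho> t)), e)) (std_simplex m)"

definition proj_simplex :: "nat \<Rightarrow> ((nat \<Rightarrow> real) \<Rightarrow> real \<times> real \<times> real \<times> real)
      \<Rightarrow> ((nat \<Rightarrow> real) \<Rightarrow> real \<times> real \<times> real)" where
  "proj_simplex m \<sigma> = restrict (\<lambda>t. (fst (\<sigma> t), fst (snd (\<sigma> t)), fst (snd (snd (\<sigma> t))))) (std_simplex m)"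

definition is_lift :: "nat \<Rightarrow> ((nat \<Rightarrow> real) \<Rightarrow> real \<times> real \<times> real \<times> real) \<Rightarrow> bool" where
  "is_lift m \<sigma> \<longleftrightarrow> (\<exists>e\<in>{1, -1}. \<sigma> = lift_simplex e m (proj_simplex m \<sigma>))"

lemma lift_simplex_extensional: "lift_simplex e m \<rho> \<in> extensional (std_simplex m)"
  unfolding lift_simplex_def by simp

lemma proj_simplex_extensional: "proj_simplex m \<sigma> \<in> extensional (std_simplex m)"
  unfolding proj_simplex_def by simp

lemma proj_lift_simplex: "\<rho> \<in> extensional (std_simplex m) \<Longrightarrow> proj_simplex m (lift_simplex e m \<rho>) = \<rho>"
  unfolding proj_simplex_def lift_simplex_def by (rule ext) (auto simp: extensional_def)

lemma lift_simplex_eq_iff: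
  assumes "\<rho> \<in> extensional (std_simplex m)" "\<rho>' \<in> extensional (std_simplex m)"
  shows "lift_simplex e m \<rho> = lift_simplex e' m \<rho>' \<longleftrightarrow> e = e' \<and> \<rho> = \<rho>'"
proof
  assume eq: "lift_simplex e m \<rho> = lift_simplex e' m \<rho>'"
  then have "lift_simplex e m \<rho> (\<lambda>i. if i = 0 then 1 else 0) = lift_simplex e' m \<rho>' (\<lambda>i. if i = 0 then 1 else 0)"
    by simp
  then have "e = e'" using vertex_in_std_simplex[of m] unfolding lift_simplex_def by simp
  then show "e = e' \<and> \<rho> = \<rho>'" using eq assms by (metis proj_lift_simplex)
qed simp

lemma is_lift_lift_simplex:
  "e \<in> {1, -1} \<Longrightarrow> \<rho> \<in> extensional (std_simplex m) \<Longrightarrow> is_lift m (lift_simplex e m \<rho>)"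
  unfolding is_lift_def using proj_lift_simplex by auto

lemma reflect_lift_simplex: "restrict (sbar \<circ> lift_simplex e m \<rho>) (std_simplex m) = lift_simplex (- e) m \<rho>"
  unfolding lift_simplex_def sbar_def by (auto intro!: ext)

lemma sing_face_lift_simplex:
  assumes "k \<le> Suc n"
  shows "sing_face (Suc n) k (lift_simplex e (Suc n) \<rho>) = lift_simplex e n (sing_face (Suc n) k \<rho>)"
  unfolding sing_face_def lift_simplex_def using face_map_in_std_simplex[OF assms] by (auto intro!: ext)

lemma sing_face_extensional: "sing_face (Suc n) k \<sigma> \<in> extensional (std_simplex n)"
  unfolding sing_face_def by simp

lemma indicator_lift_sheets:
  assumes "\<rho> \<in> extensional (std_simplex n)"
  shows "(if lift_simplex 1 n \<rho> = \<sigma> then x else 0) + (if lift_simplex (-1) n \<rho> = \<sigma> then x else 0)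
     = (if is_lift n \<sigma> \<and> \<rho> = proj_simplex n \<sigma> then x else (0::'a::comm_monoid_add))"
proof (cases "is_lift n \<sigma> \<and> \<rho> = proj_simplex n \<sigma>")
  case True
  then obtain e where e: "e = 1 \<or> e = -1" and \<sigma>: "\<sigma> = lift_simplex e n \<rho>"
    unfolding is_lift_def by blast
  have "lift_simplex 1 n \<rho> \<noteq> lift_simplex (-1) n \<rho>"
    using lift_simplex_eq_iff[OF assms assms] by simp
  with e have "(if lift_simplex 1 n \<rho> = \<sigma> then x else 0) + (if lift_simplex (-1) n \<rho> = \<sigma> then x else 0) = x"
    unfolding \<sigma> by auto
  then show ?thesis by (simp only: if_P[OF True])
next
  case False
  have "lift_simplex e n \<rho> \<noteq> \<sigma>" if "e \<in> {1, -1}" for e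
  proof
    assume "lift_simplex e n \<rho> = \<sigma>"
    with False show False
      using is_lift_lift_simplex[OF that assms] proj_lift_simplex[OF assms] by auto
  qed
  then show ?thesis by (simp only: if_not_P[OF False] if_False) simp
qed

text \<open>\<open>sym_lift\<close> below sees a simplex only through its projection, so it is injective only on chains
  supported by extensional maps; singular simplices are extensional by definition.\<close>

definition extensional_chains :: "nat \<Rightarrow> ('p, 'k::field) chain set" where
  "extensional_chains m = {d. \<forall>\<tau>. d \<tau> \<noteq> 0 \<longrightarrow> \<tau> \<in> extensional (std_simplex m)}"

lemma chains_subset_extensional_chains: "chains K m Y \<subseteq> extensional_chains m"
  unfolding chains_def extensional_chains_def sing_simplex_def by blast

lemma chain_bd_in_extensional_chains: "chain_bd (Suc n) c \<in> extensional_chains n"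
  unfolding extensional_chains_def
proof (intro CollectI allI impI, rule ccontr)
  fix \<tau> assume "chain_bd (Suc n) c \<tau> \<noteq> 0" and "\<tau> \<notin> extensional (std_simplex n)"
  then have "sing_face (Suc n) k \<sigma> \<noteq> \<tau>" for k \<sigma>
    using sing_face_extensional by metis
  then have "chain_bd (Suc n) c \<tau> = 0" unfolding chain_bd_def by simp
  with \<open>chain_bd (Suc n) c \<tau> \<noteq> 0\<close> show False ..
qed

lemma lincomb_in_extensional_chains:
  "S \<subseteq> extensional_chains m \<Longrightarrow> lincomb a S \<in> extensional_chains m"
  unfolding extensional_chains_def
proof (intro CollectI allI impI, rule ccontr)
  fix \<tau> assume S: "S \<subseteq> {d. \<forall>\<tau>. d \<tau> \<noteq> 0 \<longrightarrow> \<tau> \<in> extensional (std_simplex m)}"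
    and ne: "lincomb a S \<tau> \<noteq> 0" and "\<tau> \<notin> extensional (std_simplex m)"
  then have "s \<tau> = 0" if "s \<in> S" for s using that by blast
  then have "lincomb a S \<tau> = 0" unfolding lincomb_def by (simp add: sum.neutral)
  with ne show False ..
qed

lemma chains_mono: "Y \<subseteq> Z \<Longrightarrow> chains K m Y \<subseteq> chains K m Z"
  unfolding chains_def sing_simplex_def by blast

text \<open>The chain \<open>\<Sum>\<^sub>\<rho> d \<rho> (\<rho>\<^sub>+ + \<rho>\<^sub>-)\<close> of \<open>\<bar>C\<close>, where \<open>\<rho>\<^sub>\<plusminus>\<close> are the lifts
  of a simplex \<open>\<rho>\<close> of \<open>S\<^sup>2\<close> to the two sheets \<open>X\<^sub>\<plusminus>\<close>.\<close>

definition sym_lift :: "nat \<Rightarrow> (real \<times> real \<times> real, 'k::field) chain \<Rightarrow> (real \<times> real \<times> real \<times> real, 'k) chain" where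
  "sym_lift m d = (\<lambda>\<sigma>. if is_lift m \<sigma> then d (proj_simplex m \<sigma>) else 0)"

lemma sym_lift_lift_simplex:
  "e \<in> {1, -1} \<Longrightarrow> \<rho> \<in> extensional (std_simplex m) \<Longrightarrow> sym_lift m d (lift_simplex e m \<rho>) = d \<rho>"
  unfolding sym_lift_def using is_lift_lift_simplex proj_lift_simplex by auto

lemma sym_lift_zero: "sym_lift m (\<lambda>_. 0) = (\<lambda>_. 0)"
  unfolding sym_lift_def by auto

lemma sym_lift_sum: "sym_lift m (\<lambda>\<tau>. \<Sum>s\<in>S. a s * d s \<tau>) = (\<lambda>\<sigma>. \<Sum>s\<in>S. a s * sym_lift m (d s) \<sigma>)"
  unfolding sym_lift_def by auto

lemma inj_on_sym_lift:
  "inj_on (sym_lift m :: (real \<times> real \<times> real, 'k::field) chain \<Rightarrow> _) (extensional_chains m)"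
proof (rule inj_onI, rule ext)
  fix d d' :: "(real \<times> real \<times> real, 'k) chain" and \<tau>
  assume d: "d \<in> extensional_chains m" and d': "d' \<in> extensional_chains m"
    and eq: "sym_lift m d = sym_lift m d'"
  show "d \<tau> = d' \<tau>"
  proof (cases "\<tau> \<in> extensional (std_simplex m)")
    case True
    then show ?thesis using eq sym_lift_lift_simplex[of 1 \<tau> m] by (metis insertI1)
  next
    case False
    then have "d \<tau> = 0" "d' \<tau> = 0" using d d' unfolding extensional_chains_def by auto
    then show ?thesis by simp
  qed
qed

lemma support_sym_lift:
  assumes "d \<in> extensional_chains m"
  shows "{\<sigma>. sym_lift m d \<sigma> \<noteq> 0}
    = lift_simplex 1 m ` {\<rho>. d \<rho> \<noteq> 0} \<union> lift_simplex (-1) m ` {\<rho>. d \<rho> \<noteq> 0}"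
proof (intro equalityI subsetI)
  fix \<sigma> assume "\<sigma> \<in> {\<sigma>. sym_lift m d \<sigma> \<noteq> 0}"
  then have "is_lift m \<sigma>" and "d (proj_simplex m \<sigma>) \<noteq> 0" unfolding sym_lift_def by (auto split: if_splits)
  then show "\<sigma> \<in> lift_simplex 1 m ` {\<rho>. d \<rho> \<noteq> 0} \<union> lift_simplex (-1) m ` {\<rho>. d \<rho> \<noteq> 0}"
    unfolding is_lift_def by blast
next
  fix \<sigma> assume "\<sigma> \<in> lift_simplex 1 m ` {\<rho>. d \<rho> \<noteq> 0} \<union> lift_simplex (-1) m ` {\<rho>. d \<rho> \<noteq> 0}"
  then obtain e \<rho> where "e \<in> {1, -1}" "d \<rho> \<noteq> 0" "\<sigma> = lift_simplex e m \<rho>" by blast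
  moreover from \<open>d \<rho> \<noteq> 0\<close> have "\<rho> \<in> extensional (std_simplex m)"
    using assms unfolding extensional_chains_def by blast
  ultimately show "\<sigma> \<in> {\<sigma>. sym_lift m d \<sigma> \<noteq> 0}" by (simp add: sym_lift_lift_simplex)
qed

lemma sum_support_sym_lift:
  assumes fin: "finite {\<rho>. d \<rho> \<noteq> 0}" and ext: "d \<in> extensional_chains m"
  shows "(\<Sum>\<sigma> | sym_lift m d \<sigma> \<noteq> 0. F \<sigma>)
    = (\<Sum>\<rho> | d \<rho> \<noteq> 0. F (lift_simplex 1 m \<rho>) + F (lift_simplex (-1) m \<rho>))"
proof -
  let ?D = "{\<rho>. d \<rho> \<noteq> 0}"
  have D_ext: "?D \<subseteq> extensional (std_simplex m)" using ext unfolding extensional_chains_def by blast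
  have inj: "inj_on (lift_simplex e m) ?D" for e
  proof (rule inj_onI)
    fix \<rho> \<rho>' assume "\<rho> \<in> ?D" "\<rho>' \<in> ?D" "lift_simplex e m \<rho> = lift_simplex e m \<rho>'"
    then show "\<rho> = \<rho>'" using lift_simplex_eq_iff[of \<rho> m \<rho>' e e] D_ext by auto
  qed
  have disj: "lift_simplex 1 m ` ?D \<inter> lift_simplex (-1) m ` ?D = {}"
  proof (rule ccontr)
    assume "lift_simplex 1 m ` ?D \<inter> lift_simplex (-1) m ` ?D \<noteq> {}"
    then obtain \<rho> \<rho>' where "\<rho> \<in> ?D" "\<rho>' \<in> ?D" "lift_simplex 1 m \<rho> = lift_simplex (-1) m \<rho>'" by auto
    then show False using lift_simplex_eq_iff[of \<rho> m \<rho>' 1 "-1"] D_ext by auto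
  qed
  show ?thesis
    unfolding support_sym_lift[OF ext] sum.union_disjoint[OF finite_imageI[OF fin] finite_imageI[OF fin] disj]
      sum.reindex[OF inj] sum.distrib by simp
qed

lemma chain_bd_sym_lift:
  fixes d :: "(real \<times> real \<times> real, 'k::field) chain"
  assumes fin: "finite {\<rho>. d \<rho> \<noteq> 0}" and ext: "d \<in> extensional_chains (Suc n)"
  shows "chain_bd (Suc n) (sym_lift (Suc n) d) = sym_lift n (chain_bd (Suc n) d)"
proof
  fix \<sigma>'
  have D_ext: "\<rho> \<in> extensional (std_simplex (Suc n))" if "d \<rho> \<noteq> 0" for \<rho>
    using ext that unfolding extensional_chains_def by blast
  have "chain_bd (Suc n) (sym_lift (Suc n) d) \<sigma>' = (\<Sum>\<sigma> | sym_lift (Suc n) d \<sigma> \<noteq> 0.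
      \<Sum>k\<le>Suc n. if sing_face (Suc n) k \<sigma> = \<sigma>' then (-1)^k * sym_lift (Suc n) d \<sigma> else 0)"
    by (simp add: chain_bd_def)
  also have "\<dots> = (\<Sum>\<rho> | d \<rho> \<noteq> 0. \<Sum>k\<le>Suc n.
          (if lift_simplex 1 n (sing_face (Suc n) k \<rho>) = \<sigma>' then (-1)^k * d \<rho> else 0)
        + (if lift_simplex (-1) n (sing_face (Suc n) k \<rho>) = \<sigma>' then (-1)^k * d \<rho> else 0))"
    unfolding sum_support_sym_lift[OF fin ext] sum.distrib[symmetric]
  proof (rule sum.cong[OF refl], rule sum.cong[OF refl])
    fix \<rho> k assume "\<rho> \<in> {\<rho>. d \<rho> \<noteq> 0}" and k: "k \<in> {..Suc n}"
    then have "\<rho> \<in> extensional (std_simplex (Suc n))" using D_ext by simp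
    then have "sym_lift (Suc n) d (lift_simplex e (Suc n) \<rho>) = d \<rho>" if "e \<in> {1, -1}" for e
      by (rule sym_lift_lift_simplex[OF that])
    moreover have "sing_face (Suc n) k (lift_simplex e (Suc n) \<rho>) = lift_simplex e n (sing_face (Suc n) k \<rho>)" for e
      using sing_face_lift_simplex k by simp
    ultimately show "(if sing_face (Suc n) k (lift_simplex 1 (Suc n) \<rho>) = \<sigma>'
          then (-1)^k * sym_lift (Suc n) d (lift_simplex 1 (Suc n) \<rho>) else 0)
        + (if sing_face (Suc n) k (lift_simplex (-1) (Suc n) \<rho>) = \<sigma>'
          then (-1)^k * sym_lift (Suc n) d (lift_simplex (-1) (Suc n) \<rho>) else 0)
      = (if lift_simplex 1 n (sing_face (Suc n) k \<rho>) = \<sigma>' then (-1)^k * d \<rho> else 0)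
        + (if lift_simplex (-1) n (sing_face (Suc n) k \<rho>) = \<sigma>' then (-1)^k * d \<rho> else 0)"
      by simp
  qed
  also have "\<dots> = (\<Sum>\<rho> | d \<rho> \<noteq> 0. \<Sum>k\<le>Suc n.
      if is_lift n \<sigma>' \<and> sing_face (Suc n) k \<rho> = proj_simplex n \<sigma>' then (-1)^k * d \<rho> else 0)"
    by (intro sum.cong refl) (rule indicator_lift_sheets[OF sing_face_extensional])
  also have "\<dots> = sym_lift n (chain_bd (Suc n) d) \<sigma>'"
    unfolding sym_lift_def chain_bd_def by simp
  finally show "chain_bd (Suc n) (sym_lift (Suc n) d) \<sigma>' = sym_lift n (chain_bd (Suc n) d) \<sigma>'" .
qed

lemma chain_bd_sym_lift_eq_0_iff:
  assumes "d \<in> chains K m Y"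
  shows "chain_bd m (sym_lift m d) = (\<lambda>_. 0) \<longleftrightarrow> chain_bd m d = (\<lambda>_. 0)"
proof (cases m)
  case 0
  then show ?thesis unfolding chain_bd_def by simp
next
  case (Suc k)
  have "finite {\<rho>. d \<rho> \<noteq> 0}" "d \<in> extensional_chains (Suc k)"
    using assms chains_subset_extensional_chains unfolding chains_def Suc by auto
  then have "chain_bd m (sym_lift m d) = sym_lift k (chain_bd m d)"
    unfolding Suc by (rule chain_bd_sym_lift)
  then have "chain_bd m (sym_lift m d) = (\<lambda>_. 0) \<longleftrightarrow> sym_lift k (chain_bd m d) = sym_lift k (\<lambda>_. 0)"
    by (simp add: sym_lift_zero)
  also have "\<dots> \<longleftrightarrow> chain_bd m d = (\<lambda>_. 0)"
    using chain_bd_in_extensional_chains[of k] unfolding Suc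
    by (intro inj_on_eq_iff[OF inj_on_sym_lift]) (auto simp: extensional_chains_def)
  finally show ?thesis .
qed

lemma sing_simplex_lift_simplex:
  assumes "sing_simplex m S2 \<rho>" "e \<in> {1, -1}"
  shows "sing_simplex m Xbar (lift_simplex e m \<rho>)"
proof -
  have "continuous_on (std_simplex m) (\<lambda>t. (fst (\<rho> t), fst (snd (\<rho> t)), snd (snd (\<rho> t)), e))"
    using assms(1) unfolding sing_simplex_def by (intro continuous_intros) auto
  then have "continuous_on (std_simplex m) (lift_simplex e m \<rho>)"
    unfolding lift_simplex_def continuous_on_restrict_iff .
  moreover have "lift_simplex e m \<rho> ` std_simplex m \<subseteq> Xbar"
    using assms unfolding sing_simplex_def lift_simplex_def S2_def Xbar_def Xplus_def Xminus_def
    by (auto split: prod.splits)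
  ultimately show ?thesis unfolding sing_simplex_def using lift_simplex_extensional by blast
qed

lemma sing_simplex_Xbar_is_lift:
  assumes "sing_simplex m Xbar \<sigma>"
  shows "is_lift m \<sigma>"
proof -
  define h where "h = (\<lambda>t. snd (snd (snd (\<sigma> t))))"
  have on_sheets: "h t \<in> {1, -1}" if "t \<in> std_simplex m" for t
    using assms that unfolding sing_simplex_def Xbar_def Xplus_def Xminus_def h_def by auto
  have "continuous_on (std_simplex m) h"
    using assms unfolding sing_simplex_def h_def by (intro continuous_intros) auto
  then obtain e where e: "\<And>t. t \<in> std_simplex m \<Longrightarrow> h t = e"
    using sign_valued_constant_on_std_simplex on_sheets unfolding constant_on_def by blast
  have "e \<in> {1, -1}" using on_sheets e vertex_in_std_simplex by metis
  moreover have "\<sigma> = lift_simplex e m (proj_simplex m \<sigma>)"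
  proof
    fix t show "\<sigma> t = lift_simplex e m (proj_simplex m \<sigma>) t"
      using assms e unfolding sing_simplex_def lift_simplex_def proj_simplex_def h_def
      by (cases "t \<in> std_simplex m") (auto simp: prod_eq_iff extensional_def)
  qed
  ultimately show ?thesis unfolding is_lift_def by blast
qed

lemma sing_simplex_proj_simplex:
  assumes "sing_simplex m Xbar \<sigma>"
  shows "sing_simplex m S2 (proj_simplex m \<sigma>)"
proof -
  have "continuous_on (std_simplex m) (\<lambda>t. (fst (\<sigma> t), fst (snd (\<sigma> t)), fst (snd (snd (\<sigma> t)))))"
    using assms unfolding sing_simplex_def by (intro continuous_intros) auto
  then have "continuous_on (std_simplex m) (proj_simplex m \<sigma>)"
    unfolding proj_simplex_def continuous_on_restrict_iff .
  moreover have "proj_simplex m \<sigma> ` std_simplex m \<subseteq> S2"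
    using assms unfolding sing_simplex_def proj_simplex_def S2_def Xbar_def Xplus_def Xminus_def
    by auto
  ultimately show ?thesis unfolding sing_simplex_def using proj_simplex_extensional by blast
qed

lemma sheets_delta_eq_sym_lift:
  assumes "sing_simplex m Xbar \<sigma>"
  shows "delta \<sigma> \<tau> + delta (restrict (sbar \<circ> \<sigma>) (std_simplex m)) \<tau>
    = sym_lift m (delta (proj_simplex m \<sigma>)) \<tau>" (is "?lhs = _")
proof -
  define \<rho> where "\<rho> = proj_simplex m \<sigma>"
  obtain e where e: "e = 1 \<or> e = -1" and \<sigma>: "\<sigma> = lift_simplex e m \<rho>"
    using sing_simplex_Xbar_is_lift[OF assms] unfolding is_lift_def \<rho>_def by blast
  from e have "?lhs = delta (lift_simplex 1 m \<rho>) \<tau> + delta (lift_simplex (-1) m \<rho>) \<tau>"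
    by (elim disjE) (simp_all add: \<sigma> reflect_lift_simplex add.commute)
  also have "\<dots> = (if lift_simplex 1 m \<rho> = \<tau> then 1 else 0) + (if lift_simplex (-1) m \<rho> = \<tau> then 1 else 0)"
    unfolding delta_def by auto
  also have "\<dots> = sym_lift m (delta \<rho>) \<tau>"
    unfolding \<rho>_def indicator_lift_sheets[OF proj_simplex_extensional] sym_lift_def delta_def by auto
  finally show ?thesis unfolding \<rho>_def .
qed

lemma chain_eq_sum_delta:
  "finite {\<rho>. d \<rho> \<noteq> 0} \<Longrightarrow> d = (\<lambda>\<tau>. \<Sum>\<rho> | d \<rho> \<noteq> 0. d \<rho> * delta \<rho> \<tau>)"
proof (rule ext)
  fix \<tau>
  have "(\<Sum>\<rho> | d \<rho> \<noteq> 0. d \<rho> * delta \<rho> \<tau>) = (\<Sum>\<rho> | d \<rho> \<noteq> 0. if \<tau> = \<rho> then d \<rho> else 0)"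
    by (intro sum.cong) (auto simp: delta_def)
  also assume "finite {\<rho>. d \<rho> \<noteq> 0}"
  then have "(\<Sum>\<rho> | d \<rho> \<noteq> 0. if \<tau> = \<rho> then d \<rho> else 0) = d \<tau>" by (simp add: sum.delta)
  finally show "d \<tau> = (\<Sum>\<rho> | d \<rho> \<noteq> 0. d \<rho> * delta \<rho> \<tau>)" ..
qed

lemma Cbar_subset_image_sym_lift: "Cbar K m \<subseteq> sym_lift m ` chains K m S2"
proof
  fix c assume "c \<in> Cbar K m"
  then obtain S a where S: "finite S" "\<And>\<sigma>. \<sigma> \<in> S \<Longrightarrow> sing_simplex m Xbar \<sigma>"
    and c: "c = (\<lambda>\<tau>. \<Sum>\<sigma>\<in>S. a \<sigma> * (delta \<sigma> \<tau> + delta (restrict (sbar \<circ> \<sigma>) (std_simplex m)) \<tau>))"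
    unfolding Cbar_def by blast
  define d where "d = (\<lambda>\<tau>. \<Sum>\<sigma>\<in>S. a \<sigma> * delta (proj_simplex m \<sigma>) \<tau>)"
  have "c = sym_lift m d"
    unfolding c d_def sym_lift_sum by (intro ext sum.cong refl) (simp add: sheets_delta_eq_sym_lift S(2))
  moreover have supp: "\<tau> \<in> proj_simplex m ` S" if "d \<tau> \<noteq> 0" for \<tau>
    using that unfolding d_def delta_def by (auto elim: sum.not_neutral_contains_not_neutral split: if_splits)
  then have "d \<in> chains K m S2"
    unfolding chains_def using S sing_simplex_proj_simplex
    by (auto intro: finite_subset[of _ "proj_simplex m ` S"])
  ultimately show "c \<in> sym_lift m ` chains K m S2" by blast
qed

lemma sym_lift_in_Cbar:
  assumes d: "d \<in> chains K m S2"
  shows "sym_lift m d \<in> Cbar K m"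
proof -
  let ?D = "{\<rho>. d \<rho> \<noteq> 0}"
  have fin: "finite ?D" and sing: "\<And>\<rho>. \<rho> \<in> ?D \<Longrightarrow> sing_simplex m S2 \<rho>"
    using d unfolding chains_def by auto
  have D_ext: "\<And>\<rho>. \<rho> \<in> ?D \<Longrightarrow> \<rho> \<in> extensional (std_simplex m)"
    using sing unfolding sing_simplex_def by blast
  have lift: "\<And>\<rho>. \<rho> \<in> ?D \<Longrightarrow> sing_simplex m Xbar (lift_simplex 1 m \<rho>)"
    using sing sing_simplex_lift_simplex by blast
  have inj: "inj_on (lift_simplex 1 m) ?D"
    using D_ext lift_simplex_eq_iff by (intro inj_onI) simp
  have "sym_lift m d = (\<lambda>\<sigma>. \<Sum>\<rho>\<in>?D. d \<rho> * sym_lift m (delta \<rho>) \<sigma>)"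
    by (subst chain_eq_sum_delta[OF fin]) (rule sym_lift_sum)
  also have "\<dots> = (\<lambda>\<tau>. \<Sum>\<sigma>\<in>lift_simplex 1 m ` ?D. d (proj_simplex m \<sigma>)
      * (delta \<sigma> \<tau> + delta (restrict (sbar \<circ> \<sigma>) (std_simplex m)) \<tau>))"
    unfolding sum.reindex[OF inj, unfolded comp_def]
  proof (intro ext sum.cong refl)
    fix \<tau> \<rho> assume "\<rho> \<in> ?D"
    have "d \<rho> * sym_lift m (delta \<rho>) \<tau> = d \<rho>
        * (delta (lift_simplex 1 m \<rho>) \<tau> + delta (restrict (sbar \<circ> lift_simplex 1 m \<rho>) (std_simplex m)) \<tau>)"
      using D_ext[OF \<open>\<rho> \<in> ?D\<close>] lift[OF \<open>\<rho> \<in> ?D\<close>]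
      by (simp add: sheets_delta_eq_sym_lift proj_lift_simplex)
    then show "d \<rho> * sym_lift m (delta \<rho>) \<tau> = d (proj_simplex m (lift_simplex 1 m \<rho>))
        * (delta (lift_simplex 1 m \<rho>) \<tau> + delta (restrict (sbar \<circ> lift_simplex 1 m \<rho>) (std_simplex m)) \<tau>)"
      unfolding proj_lift_simplex[OF D_ext[OF \<open>\<rho> \<in> ?D\<close>]] .
  qed
  finally have "sym_lift m d = (\<lambda>\<tau>. \<Sum>\<sigma>\<in>lift_simplex 1 m ` ?D. d (proj_simplex m \<sigma>)
      * (delta \<sigma> \<tau> + delta (restrict (sbar \<circ> \<sigma>) (std_simplex m)) \<tau>))" .
  moreover have "finite (lift_simplex 1 m ` ?D)" using fin by blast
  moreover have "\<forall>\<sigma>\<in>lift_simplex 1 m ` ?D. sing_simplex m Xbar \<sigma>" using lift by blast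
  ultimately show ?thesis unfolding Cbar_def mem_Collect_eq
    by (intro exI[of _ "lift_simplex 1 m ` ?D"] exI[of _ "\<lambda>\<sigma>. d (proj_simplex m \<sigma>)"]) blast
qed

lemma Cbar_eq_image_sym_lift: "Cbar K m = sym_lift m ` chains K m S2"
  using Cbar_subset_image_sym_lift sym_lift_in_Cbar by blast

lemma phibar_le_iff:
  "phibar \<phi> m c \<le> ereal u \<longleftrightarrow> (\<forall>\<sigma>. c \<sigma> \<noteq> 0 \<longrightarrow> (\<forall>t\<in>std_simplex m. \<phi> (\<sigma> t) \<le> u))"
  unfolding phibar_def by (auto simp: Sup_le_iff)

lemma sing_simplex_sublevel_iff:
  assumes "sing_simplex m S2 \<rho>"
  shows "sing_simplex m {y \<in> S2. phi_prime \<phi> y \<le> u} \<rho>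
    \<longleftrightarrow> (\<forall>e\<in>{1, -1}. \<forall>t\<in>std_simplex m. \<phi> (lift_simplex e m \<rho> t) \<le> u)"
proof -
  have "phi_prime \<phi> (\<rho> t) \<le> u \<longleftrightarrow> (\<forall>e\<in>{1, -1}. \<phi> (lift_simplex e m \<rho> t) \<le> u)"
    if "t \<in> std_simplex m" for t
    using that by (cases "\<rho> t") (simp add: lift_simplex_def phi_prime_def)
  then show ?thesis using assms unfolding sing_simplex_def by blast
qed

lemma phibar_sym_lift_le_iff:
  assumes "d \<in> chains K m S2"
  shows "phibar \<phi> m (sym_lift m d) \<le> ereal u \<longleftrightarrow> d \<in> chains K m {y \<in> S2. phi_prime \<phi> y \<le> u}"
proof -
  have sing: "\<And>\<rho>. d \<rho> \<noteq> 0 \<Longrightarrow> sing_simplex m S2 \<rho>" using assms unfolding chains_def by blast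
  then have ext: "d \<in> extensional_chains m"
    unfolding extensional_chains_def sing_simplex_def by blast
  have "phibar \<phi> m (sym_lift m d) \<le> ereal u
      \<longleftrightarrow> (\<forall>\<sigma>\<in>{\<sigma>. sym_lift m d \<sigma> \<noteq> 0}. \<forall>t\<in>std_simplex m. \<phi> (\<sigma> t) \<le> u)"
    unfolding phibar_le_iff by simp
  also have "\<dots> \<longleftrightarrow> (\<forall>\<rho>. d \<rho> \<noteq> 0 \<longrightarrow> (\<forall>e\<in>{1, -1}. \<forall>t\<in>std_simplex m. \<phi> (lift_simplex e m \<rho> t) \<le> u))"
    unfolding support_sym_lift[OF ext] by blast
  also have "\<dots> \<longleftrightarrow> (\<forall>\<rho>. d \<rho> \<noteq> 0 \<longrightarrow> sing_simplex m {y \<in> S2. phi_prime \<phi> y \<le> u} \<rho>)"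
    using sing sing_simplex_sublevel_iff by blast
  also have "\<dots> \<longleftrightarrow> d \<in> chains K m {y \<in> S2. phi_prime \<phi> y \<le> u}"
    using assms unfolding chains_def by blast
  finally show ?thesis .
qed

lemma image_sym_lift_sublevel_chains:
  "sym_lift m ` chains K m {y \<in> S2. phi_prime \<phi> y \<le> u} = Cbar_sub K \<phi> m u"
proof (intro equalityI subsetI)
  fix c assume "c \<in> sym_lift m ` chains K m {y \<in> S2. phi_prime \<phi> y \<le> u}"
  then obtain d where d: "d \<in> chains K m {y \<in> S2. phi_prime \<phi> y \<le> u}" and c: "c = sym_lift m d"
    by blast
  have "d \<in> chains K m S2" using d chains_mono[of "{y \<in> S2. phi_prime \<phi> y \<le> u}" S2] by blast
  then show "c \<in> Cbar_sub K \<phi> m u"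
    unfolding Cbar_sub_def Cbar_eq_image_sym_lift c using d phibar_sym_lift_le_iff by blast
next
  fix c assume "c \<in> Cbar_sub K \<phi> m u"
  then obtain d where "d \<in> chains K m S2" "c = sym_lift m d" "phibar \<phi> m c \<le> ereal u"
    unfolding Cbar_sub_def Cbar_eq_image_sym_lift by blast
  then show "c \<in> sym_lift m ` chains K m {y \<in> S2. phi_prime \<phi> y \<le> u}"
    using phibar_sym_lift_le_iff by blast
qed

theorem mainTheorem7:
  fixes \<phi> :: "real \<times> real \<times> real \<times> real \<Rightarrow> real" and n :: nat and u v :: real
  assumes "continuous_on Xbar \<phi>" and "u < v"
  shows "pbn_bar TYPE('k::field) \<phi> n u v = pbn_classical TYPE('k) S2 (phi_prime \<phi>) n u v"
proof -
  let ?A = "\<lambda>w m. chains TYPE('k) m {y \<in> S2. phi_prime \<phi> y \<le> w}"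
  interpret pers_rank_iso "?A u" "?A v" "\<lambda>m. Cbar_sub TYPE('k) \<phi> m u" "\<lambda>m. Cbar_sub TYPE('k) \<phi> m v"
    n "sym_lift n" "sym_lift (Suc n)" "extensional_chains n"
  proof
    show "sym_lift n ` ?A u n = Cbar_sub TYPE('k) \<phi> n u"
      and "sym_lift (Suc n) ` ?A v (Suc n) = Cbar_sub TYPE('k) \<phi> (Suc n) v"
      by (rule image_sym_lift_sublevel_chains)+
    show "inj_on (sym_lift n) (extensional_chains n)" by (rule inj_on_sym_lift)
    show "?A u n \<subseteq> extensional_chains n" by (rule chains_subset_extensional_chains)
    show "chain_bd (Suc n) ` ?A v (Suc n) \<subseteq> extensional_chains n"
      using chain_bd_in_extensional_chains by blast
    show "sym_lift n (lincomb a S) = (\<lambda>\<tau>. \<Sum>s\<in>S. a s * sym_lift n s \<tau>)" for a S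
      unfolding lincomb_def by (rule sym_lift_sum)
    show "chain_bd (Suc n) (sym_lift (Suc n) y) = sym_lift n (chain_bd (Suc n) y)" if "y \<in> ?A v (Suc n)" for y
      using that chains_subset_extensional_chains unfolding chains_def
      by (intro chain_bd_sym_lift) auto
    show "chain_bd n (sym_lift n x) = (\<lambda>_. 0) \<longleftrightarrow> chain_bd n x = (\<lambda>_. 0)" if "x \<in> ?A u n" for x
      using that by (rule chain_bd_sym_lift_eq_0_iff)
  qed (rule lincomb_in_extensional_chains)
  show ?thesis unfolding pbn_bar_def pbn_classical_def using pers_rank_eq by simp
qed

end
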